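(* Consider an iteration of the $(k,k-1)$-completion with current subgraph $H$, chosen pair $(x,y)$, chosen shortest path $P_{x,y}$, chosen minimal $k$-segmentation $\mathcal{S}$, and added edges $e_1,\ldots,e_t$ (the elements of $E_k(\mathcal{S},H)$). Let $a,b$ be vertices in $\bigcup_{i=1}^t V(e_i)$ and let $s,s'$ be their respective centers. If the pair $(s,s')$ is finalized in $H$, i.e. \[ \mathrm{dist}_H(s,s')\leq k\cdot\mathrm{dist}_G(s,s')-k^2W, \] then $a,b$ are the two endpoints of a segment of $\mathcal{S}$ that has stretch at most $k$ in $H$ (i.e. $\mathrm{dist}_H(a,b)\leq k\,\mathrm{dist}_G(a,b)$).
   Context: $G=(V,E,w)$ is an undirected graph with positive edge weights, in which every edge is a shortest path between its endpoints; $\mathrm{dist}_X$ is the weighted shortest-path distance in a graph $X$, and $W=W_{\max}(G)$ is the maximum edge weight. $k\geq3$ is odd and $R=(k-1)/2$. For a shortest path $P_{x,y}=(x_0,\ldots,x_t)$ in $G$ and $H\subseteq G$, a $k$-segmentation is a sequence of index intervals $([i_0,i_1],\ldots,[i_{s-1},i_s])$ with $0=i_0<\cdots<i_s=t$ such that every segment with $i_j-i_{j-1}\geq2$ satisfies $\mathrm{dist}_H(x_{i_{j-1}},x_{i_j})\leq k\,\mathrm{dist}_G(x_{i_{j-1}},x_{i_j})$; it is minimal if no consecutive sequence of segments can be merged to give another $k$-segmentation. $E_k(\mathcal{S},H)$ is the set of edges $e=\{u,v\}$ forming length-one segments of $\mathcal{S}$ with $\mathrm{dist}_H(u,v)>k\,w(e)$.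 The $(k,k-1)$-completion starts from $H\gets H_0$, where $H_0$ is the $(2k-1)$-spanner output by the Baswana–Sen clustering algorithm with parameter $k$ (with sampled center sets $V=S_0\supseteq S_1\supseteq\cdots$), and, while some pair $x,y$ has $\mathrm{dist}_H(x,y)>k\,\mathrm{dist}_G(x,y)+(k-1)W$, picks such a pair, a shortest path $P_{x,y}$, a minimal $k$-segmentation $\mathcal{S}$ w.r.t. the current $H$, and sets $H\gets H\cup E_k(\mathcal{S},H)$. For an endpoint $a$ of an edge $e\in E_k(\mathcal{S},H)$, its center is its Baswana–Sen cluster center $s_a$ in the level-$R$ center set $S_R$; by the Baswana–Sen clustering invariant it satisfies $\mathrm{dist}_H(a,s_a)\leq R\cdot w(e)$. *)

theory Defs
  imports "HOL-Analysis.Analysis"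
begin

(* Weighted undirected graphs: an edge set  E :: 'a set set  (edges are 2-element sets)
   and a weight function  w :: 'a set => real.  A subgraph H is a subset of E with the
   same weights. *)

definition wgraph :: "'a set \<Rightarrow> 'a set set \<Rightarrow> ('a set \<Rightarrow> real) \<Rightarrow> bool" where
  "wgraph V E w \<longleftrightarrow> finite V \<and> (\<forall>e\<in>E. e \<subseteq> V \<and> card e = 2 \<and> w e > 0)"

definition walk :: "'a set set \<Rightarrow> 'a list \<Rightarrow> bool" where
  "walk E p \<longleftrightarrow> p \<noteq> [] \<and> (\<forall>i. Suc i < length p \<longrightarrow> {p ! i, p ! Suc i} \<in> E)"

definition walk_weight :: "('a set \<Rightarrow> real) \<Rightarrow> 'a list \<Rightarrow> real" where
  "walk_weight w p = (\<Sum>i<length p - 1. w {p ! i, p ! Suc i})"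

(* weighted shortest-path distance in the graph with edge set E (\<infinity> if disconnected) *)
definition gdist :: "'a set set \<Rightarrow> ('a set \<Rightarrow> real) \<Rightarrow> 'a \<Rightarrow> 'a \<Rightarrow> ereal" where
  "gdist E w u v = (INF p \<in> {p. walk E p \<and> hd p = u \<and> last p = v}. ereal (walk_weight w p))"

definition Wmax :: "'a set set \<Rightarrow> ('a set \<Rightarrow> real) \<Rightarrow> real" where
  "Wmax E w = Max (w ` E)"

definition shortest_path :: "'a set set \<Rightarrow> ('a set \<Rightarrow> real) \<Rightarrow> 'a \<Rightarrow> 'a \<Rightarrow> 'a list \<Rightarrow> bool" where
  "shortest_path E w x y P \<longleftrightarrow> walk E P \<and> hd P = x \<and> last P = y
      \<and> ereal (walk_weight w P) = gdist E w x y"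

(* A segmentation of the path P = (x_0,...,x_t) is given by its list of breakpoints
   I = [i_0, ..., i_s] with 0 = i_0 < ... < i_s = t; segment j (0 < j < length I) is the
   index interval [I!(j-1), I!j]. *)
definition k_segmentation ::
  "'a set set \<Rightarrow> 'a set set \<Rightarrow> ('a set \<Rightarrow> real) \<Rightarrow> nat \<Rightarrow> 'a list \<Rightarrow> nat list \<Rightarrow> bool" where
  "k_segmentation E H w k P I \<longleftrightarrow>
     I \<noteq> [] \<and> hd I = 0 \<and> last I = length P - 1 \<and> sorted_wrt (<) I \<and>
     (\<forall>j. 0 < j \<and> j < length I \<and> I ! j - I ! (j - 1) \<ge> 2 \<longrightarrow>
        gdist H w (P ! (I ! (j - 1))) (P ! (I ! j))
          \<le> ereal (real k) * gdist E w (P ! (I ! (j - 1))) (P ! (I ! j)))"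

(* minimal: no consecutive run of (at least two) segments j, ..., l+1 can be merged,
   i.e. removing the interior breakpoints I!j, ..., I!l never yields a k-segmentation *)
definition minimal_k_segmentation ::
  "'a set set \<Rightarrow> 'a set set \<Rightarrow> ('a set \<Rightarrow> real) \<Rightarrow> nat \<Rightarrow> 'a list \<Rightarrow> nat list \<Rightarrow> bool" where
  "minimal_k_segmentation E H w k P I \<longleftrightarrow>
     k_segmentation E H w k P I \<and>
     (\<forall>j l. 0 < j \<and> j \<le> l \<and> Suc l < length I \<longrightarrow>
        \<not> k_segmentation E H w k P (take j I @ drop (Suc l) I))"

definition Ek :: "'a set set \<Rightarrow> ('a set \<Rightarrow> real) \<Rightarrow> nat \<Rightarrow> 'a list \<Rightarrow> nat list \<Rightarrow> 'a set set" where
  "Ek H w k P I = {{P ! (I ! (j - 1)), P ! (I ! j)} | j.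
      0 < j \<and> j < length I \<and> I ! j - I ! (j - 1) = 1 \<and>
      gdist H w (P ! (I ! (j - 1))) (P ! (I ! j))
        > ereal (real k * w {P ! (I ! (j - 1)), P ! (I ! j)})}"

end

theory Submission
  imports Defs
begin

(* Each endpoint v of an edge of E_k(S,H) has dist_H(v, center v) <= R W.  For finalized centers
   s, s' the triangle inequality in G gives dist_G(s,s') <= dist_G(a,b) + 2 R W, and then the
   triangle inequality in H along a, s, s', b gives
     dist_H(a,b) <= 2 R W + k (dist_G(a,b) + 2 R W) - k^2 W = k dist_G(a,b) - W,
   because k = 2R + 1.  Hence a <> b and the subpath between the breakpoints a and b has stretch
   at most k; by minimality of S the segments between them cannot be merged, so a and b are
   consecutive breakpoints. *)

lemma ereal_le_INF_add_INF:
  fixes f g :: "'b \<Rightarrow> ereal"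
  assumes le: "\<And>p q. p \<in> A \<Longrightarrow> q \<in> B \<Longrightarrow> x \<le> f p + g q"
    and nonneg: "\<And>p. p \<in> A \<Longrightarrow> 0 \<le> f p" "\<And>q. q \<in> B \<Longrightarrow> 0 \<le> g q"
  shows "x \<le> (INF p\<in>A. f p) + (INF q\<in>B. g q)"
proof (cases "A = {} \<or> B = {}")
  case True
  have "0 \<le> (INF p\<in>A. f p)" "0 \<le> (INF q\<in>B. g q)"
    using nonneg by (auto intro: INF_greatest)
  with True show ?thesis by (auto simp: top_ereal_def)
next
  case False
  have "0 \<le> (INF q\<in>B. g q)"
    using nonneg by (auto intro: INF_greatest)
  have "x \<le> (INF p\<in>A. f p + (INF q\<in>B. g q))"
  proof (rule INF_greatest)
    fix p assume "p \<in> A"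
    then have "x \<le> (INF q\<in>B. f p + g q)"
      using le by (auto intro: INF_greatest)
    also have "\<dots> = f p + (INF q\<in>B. g q)"
      using False nonneg \<open>p \<in> A\<close> by (intro INF_ereal_add_right) auto
    finally show "x \<le> f p + (INF q\<in>B. g q)" .
  qed
  also have "\<dots> = (INF p\<in>A. f p) + (INF q\<in>B. g q)"
    using False nonneg \<open>0 \<le> (INF q\<in>B. g q)\<close> by (intro INF_ereal_add_left) auto
  finally show ?thesis .
qed

lemma walk_Cons_Cons: "walk E (x # y # zs) \<longleftrightarrow> {x, y} \<in> E \<and> walk E (y # zs)"
  unfolding walk_def
  by (auto simp: All_less_Suc2[where P = "\<lambda>i. {(x # y # zs) ! i, (x # y # zs) ! Suc i} \<in> E",
        simplified])

lemma walk_singleton: "walk E [x]"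
  by (simp add: walk_def)

lemma walk_weight_Cons_Cons: "walk_weight w (x # y # zs) = w {x, y} + walk_weight w (y # zs)"
  unfolding walk_weight_def by (simp only: length_Cons diff_Suc_1 sum.lessThan_Suc_shift) simp

lemma walk_weight_singleton: "walk_weight w [x] = 0"
  by (simp add: walk_weight_def)

lemma walk_append:
  assumes "walk E p" "walk E q" "last p = hd q"
  shows "walk E (p @ tl q)"
  using assms
proof (induction p rule: induct_list012)
  case 1
  then show ?case by (simp add: walk_def)
next
  case (2 x)
  then show ?case by (cases q) auto
next
  case (3 x y zs)
  then show ?case by (simp add: walk_Cons_Cons)
qed

lemma walk_weight_append:
  assumes "p \<noteq> []" "q \<noteq> []" "last p = hd q"
  shows "walk_weight w (p @ tl q) = walk_weight w p + walk_weight w q"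
  using assms
proof (induction p rule: induct_list012)
  case (2 x)
  then show ?case by (cases q) (auto simp: walk_weight_singleton)
qed (auto simp: walk_weight_Cons_Cons)

lemma walk_rev: "walk E p \<Longrightarrow> walk E (rev p)"
proof (induction p rule: induct_list012)
  case (3 x y zs)
  then have "walk E (rev (y # zs) @ tl [y, x])"
    by (intro walk_append) (auto simp: walk_Cons_Cons walk_singleton insert_commute)
  then show ?case by simp
qed (simp_all add: walk_def)

lemma walk_weight_rev: "walk_weight w (rev p) = walk_weight w p"
proof (induction p rule: induct_list012)
  case (3 x y zs)
  have "walk_weight w (rev (y # zs) @ tl [y, x]) = walk_weight w (rev (y # zs)) + walk_weight w [y, x]"
    by (intro walk_weight_append) auto
  then show ?case
    using 3 by (simp add: walk_weight_Cons_Cons walk_weight_singleton insert_commute)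
qed (simp_all add: walk_weight_def)

lemma walk_weight_nonneg:
  assumes "\<forall>e\<in>E. 0 \<le> w e" "walk E p"
  shows "0 \<le> walk_weight w p"
  using assms unfolding walk_weight_def walk_def by (intro sum_nonneg) auto

lemma gdist_nonneg: "\<forall>e\<in>E. 0 \<le> w e \<Longrightarrow> 0 \<le> gdist E w u v"
  unfolding gdist_def by (auto intro!: INF_greatest walk_weight_nonneg)

lemma gdist_refl:
  assumes "\<forall>e\<in>E. 0 \<le> w e"
  shows "gdist E w u u = 0"
proof (rule antisym)
  show "gdist E w u u \<le> 0"
    unfolding gdist_def
    by (rule INF_lower2[of "[u]"]) (simp_all add: walk_singleton walk_weight_singleton)
qed (rule gdist_nonneg[OF assms])

lemma gdist_antimono: "H \<subseteq> E \<Longrightarrow> gdist E w u v \<le> gdist H w u v"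
  unfolding gdist_def walk_def by (rule INF_superset_mono) auto

lemma gdist_sym: "gdist E w u v = gdist E w v u"
proof -
  have "{p. walk E p \<and> hd p = v \<and> last p = u} = rev ` {p. walk E p \<and> hd p = u \<and> last p = v}"
    by (auto simp: image_iff hd_rev last_rev walk_rev) (metis hd_rev last_rev rev_rev_ident walk_rev)
  then show ?thesis
    unfolding gdist_def by (simp add: image_comp o_def walk_weight_rev)
qed

lemma gdist_triangle:
  assumes nonneg: "\<forall>e\<in>E. 0 \<le> w e"
  shows "gdist E w u v \<le> gdist E w u m + gdist E w m v"
  unfolding gdist_def
proof (rule ereal_le_INF_add_INF)
  fix p q
  assume p: "p \<in> {p. walk E p \<and> hd p = u \<and> last p = m}"
    and q: "q \<in> {p. walk E p \<and> hd p = m \<and> last p = v}"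
  then have "p \<noteq> []" "q \<noteq> []"
    by (auto simp: walk_def)
  have "last (p @ tl q) = v"
    using q \<open>q \<noteq> []\<close> p by (cases q) auto
  with p q \<open>p \<noteq> []\<close> have "p @ tl q \<in> {p. walk E p \<and> hd p = u \<and> last p = v}"
    by (auto intro: walk_append)
  then show "(INF r\<in>{p. walk E p \<and> hd p = u \<and> last p = v}. ereal (walk_weight w r))
      \<le> ereal (walk_weight w p) + ereal (walk_weight w q)"
    using p q \<open>p \<noteq> []\<close> \<open>q \<noteq> []\<close> by (auto intro: INF_lower2 simp: walk_weight_append)
qed (auto intro: walk_weight_nonneg[OF nonneg])

lemma wgraph_finite_edges:
  assumes "wgraph V E w"
  shows "finite E"
proof (rule finite_subset)
  show "E \<subseteq> Pow V" "finite (Pow V)"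
    using assms unfolding wgraph_def by auto
qed

lemma Wmax_ge: "finite E \<Longrightarrow> e \<in> E \<Longrightarrow> w e \<le> Wmax E w"
  unfolding Wmax_def by simp

lemma k_segmentation_nth_le:
  assumes "k_segmentation E H w k P I" "j < length I"
  shows "I ! j \<le> length P - 1"
proof -
  have "sorted I" "I \<noteq> []" "last I = length P - 1"
    using assms(1) strict_sorted_imp_sorted unfolding k_segmentation_def by auto
  then show ?thesis
    using assms(2) sorted_nth_mono[of I j "length I - 1"] by (auto simp: last_conv_nth)
qed

lemma k_segmentation_merge:
  assumes S: "k_segmentation E H w k P I" and i: "i1 < i2" "i2 < length I"
    and stretch: "gdist H w (P ! (I ! i1)) (P ! (I ! i2))
      \<le> ereal (real k) * gdist E w (P ! (I ! i1)) (P ! (I ! i2))"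
  shows "k_segmentation E H w k P (take (Suc i1) I @ drop i2 I)"
proof -
  define J where "J = take (Suc i1) I @ drop i2 I"
  define \<phi> where "\<phi> m = (if m \<le> i1 then m else i2 + m - Suc i1)" for m
  have len: "length J = Suc i1 + (length I - i2)"
    using i unfolding J_def by simp
  have J_nth: "J ! m = I ! \<phi> m" if "m < length J" for m
    using that i len unfolding J_def \<phi>_def by (auto simp: nth_append)
  have \<phi>_less: "\<phi> m < length I" if "m < length J" for m
    using that i len unfolding \<phi>_def by auto
  have \<phi>_mono: "\<phi> m < \<phi> n" if "m < n" for m n
    using that i unfolding \<phi>_def by auto
  have \<phi>_last: "\<phi> (length J - 1) = length I - 1"
    using i len unfolding \<phi>_def by auto
  have \<phi>_pred: "\<phi> (m - 1) = \<phi> m - 1" "0 < \<phi> m" if "0 < m" "m \<noteq> Suc i1" for m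
    using that i unfolding \<phi>_def by auto
  have \<phi>_merged: "\<phi> (Suc i1) = i2" "\<phi> i1 = i1"
    unfolding \<phi>_def by auto
  have "I \<noteq> []" "hd I = 0" "last I = length P - 1" "sorted_wrt (<) I"
    and stretch_I: "\<And>j. 0 < j \<Longrightarrow> j < length I \<Longrightarrow> 2 \<le> I ! j - I ! (j - 1) \<Longrightarrow>
        gdist H w (P ! (I ! (j - 1))) (P ! (I ! j))
          \<le> ereal (real k) * gdist E w (P ! (I ! (j - 1))) (P ! (I ! j))"
    using S unfolding k_segmentation_def by auto
  have "J \<noteq> []"
    using len by auto
  have "k_segmentation E H w k P J"
    unfolding k_segmentation_def
  proof (intro conjI allI impI)
    show "J \<noteq> []" by fact
    show "hd J = 0"
      using \<open>J \<noteq> []\<close> J_nth[of 0] \<open>hd I = 0\<close> \<open>I \<noteq> []\<close>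
      by (simp add: hd_conv_nth \<phi>_def)
    show "last J = length P - 1"
      using \<open>J \<noteq> []\<close> J_nth[of "length J - 1"] \<phi>_last \<open>last I = length P - 1\<close> \<open>I \<noteq> []\<close>
      by (auto simp: last_conv_nth)
    show "sorted_wrt (<) J"
      using J_nth \<phi>_less \<phi>_mono \<open>sorted_wrt (<) I\<close> by (simp add: sorted_wrt_iff_nth_less)
  next
    fix m assume m: "0 < m \<and> m < length J \<and> 2 \<le> J ! m - J ! (m - 1)"
    then have J_m: "J ! m = I ! \<phi> m" "J ! (m - 1) = I ! \<phi> (m - 1)"
      using J_nth by auto
    show "gdist H w (P ! (J ! (m - 1))) (P ! (J ! m))
        \<le> ereal (real k) * gdist E w (P ! (J ! (m - 1))) (P ! (J ! m))"
    proof (cases "m = Suc i1")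
      case True
      then show ?thesis using stretch J_m \<phi>_merged by simp
    next
      case False
      then show ?thesis
        using J_m m stretch_I[of "\<phi> m"] \<phi>_less[of m] \<phi>_pred[of m] by simp
    qed
  qed
  then show ?thesis unfolding J_def .
qed

lemma minimal_k_segmentation_adjacent:
  assumes S: "minimal_k_segmentation E H w k P I" and i: "i1 < i2" "i2 < length I"
    and stretch: "gdist H w (P ! (I ! i1)) (P ! (I ! i2))
      \<le> ereal (real k) * gdist E w (P ! (I ! i1)) (P ! (I ! i2))"
  shows "i2 = Suc i1"
proof (rule ccontr)
  assume "i2 \<noteq> Suc i1"
  then have "0 < Suc i1 \<and> Suc i1 \<le> i2 - 1 \<and> Suc (i2 - 1) < length I"
    using i by auto
  then have "\<not> k_segmentation E H w k P (take (Suc i1) I @ drop (Suc (i2 - 1)) I)"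
    using S unfolding minimal_k_segmentation_def by blast
  moreover have "k_segmentation E H w k P (take (Suc i1) I @ drop i2 I)"
    using S i stretch unfolding minimal_k_segmentation_def by (blast intro: k_segmentation_merge)
  ultimately show False
    using i by (simp add: Suc_diff_1[of i2])
qed

lemma minimal_k_segmentation_segment:
  assumes S: "minimal_k_segmentation E H w k P I"
    and i: "i1 < length I" "i2 < length I" "i1 \<noteq> i2"
    and stretch: "gdist H w (P ! (I ! i1)) (P ! (I ! i2))
      \<le> ereal (real k) * gdist E w (P ! (I ! i1)) (P ! (I ! i2))"
  shows "\<exists>j. 0 < j \<and> j < length I \<and>
      {P ! (I ! i1), P ! (I ! i2)} = {P ! (I ! (j - 1)), P ! (I ! j)}"
proof (cases "i1 < i2")
  case True
  then have "i2 = Suc i1"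
    using S i stretch by (blast intro: minimal_k_segmentation_adjacent)
  then show ?thesis using i by (intro exI[of _ i2]) auto
next
  case False
  then have "i1 = Suc i2"
    using S i stretch by (auto intro: minimal_k_segmentation_adjacent simp: gdist_sym)
  then show ?thesis using i by (intro exI[of _ i1]) auto
qed

lemma Ek_subset_edges:
  assumes "k_segmentation E H w k P I" "walk E P"
  shows "Ek H w k P I \<subseteq> E"
proof
  fix e assume "e \<in> Ek H w k P I"
  then obtain j where j: "0 < j" "j < length I" "I ! j - I ! (j - 1) = 1"
    and e: "e = {P ! (I ! (j - 1)), P ! (I ! j)}"
    unfolding Ek_def by blast
  have "I ! j < length P"
    using k_segmentation_nth_le[OF assms(1) j(2)] assms(2) by (cases P) (auto simp: walk_def)
  moreover have "I ! j = Suc (I ! (j - 1))"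
    using j(3) by simp
  ultimately show "e \<in> E"
    using assms(2) e unfolding walk_def by auto
qed

lemma Ek_vertex_breakpoint:
  assumes "v \<in> \<Union>(Ek H w k P I)"
  shows "\<exists>i<length I. v = P ! (I ! i)"
proof -
  obtain j where j: "j < length I" "v = P ! (I ! (j - 1)) \<or> v = P ! (I ! j)"
    using assms unfolding Ek_def by blast
  moreover have "j - 1 < length I"
    using j(1) by simp
  ultimately show ?thesis
    by blast
qed

lemma finalized_centers_stretch:
  fixes k R :: nat and W :: real
  assumes nonneg: "\<forall>e\<in>E. 0 \<le> w e" and HE: "H \<subseteq> E" and k: "k = 2 * R + 1"
    and a: "gdist H w a ca \<le> ereal (real R * W)"
    and b: "gdist H w b cb \<le> ereal (real R * W)"
    and finalized: "gdist H w ca cb \<le> ereal (real k) * gdist E w ca cb - ereal ((real k)^2 * W)"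
  shows "gdist H w a b + ereal W \<le> ereal (real k) * gdist E w a b"
proof (cases "gdist E w a b")
  case PInf
  then show ?thesis using k by simp
next
  case MInf
  then show ?thesis using gdist_nonneg[OF nonneg] by simp
next
  case (real d)
  have nonneg_H: "\<forall>e\<in>H. 0 \<le> w e"
    using nonneg HE by blast
  have "gdist E w ca cb \<le> gdist E w ca a + gdist E w a cb"
    by (rule gdist_triangle[OF nonneg])
  also have "\<dots> \<le> gdist E w ca a + (gdist E w a b + gdist E w b cb)"
    by (intro add_left_mono gdist_triangle[OF nonneg])
  also have "\<dots> \<le> ereal (real R * W) + (ereal d + ereal (real R * W))"
  proof (intro add_mono order_refl)
    show "gdist E w ca a \<le> ereal (real R * W)"
      using a gdist_antimono[OF HE, of w a ca] by (simp add: gdist_sym[of E w ca a])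
    show "gdist E w b cb \<le> ereal (real R * W)"
      using b gdist_antimono[OF HE, of w b cb] by simp
  qed (simp add: real)
  finally obtain g where g: "gdist E w ca cb = ereal g" "g \<le> 2 * real R * W + d"
    using gdist_nonneg[OF nonneg, of ca cb] by (cases "gdist E w ca cb") (auto simp: algebra_simps)
  have "gdist H w a b \<le> gdist H w a ca + gdist H w ca b"
    by (rule gdist_triangle[OF nonneg_H])
  also have "\<dots> \<le> gdist H w a ca + (gdist H w ca cb + gdist H w cb b)"
    by (intro add_left_mono gdist_triangle[OF nonneg_H])
  finally have "gdist H w a b + ereal W
      \<le> gdist H w a ca + (gdist H w ca cb + gdist H w cb b) + ereal W"
    by (rule add_right_mono)
  also have "\<dots> \<le> ereal (real R * W)
      + (ereal (real k * g - (real k)^2 * W) + ereal (real R * W)) + ereal W"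
    using a b finalized g by (intro add_mono order_refl) (auto simp: gdist_sym[of H w cb b])
  also have "\<dots> \<le> ereal (real k * d)"
  proof -
    have "real k * g \<le> real k * (2 * real R * W + d)"
      using g by (simp add: mult_left_mono)
    then show ?thesis
      using k by (simp add: algebra_simps power2_eq_square)
  qed
  finally show ?thesis
    using real by simp
qed

theorem lemma4p10:
  fixes V :: "'a set" and E H :: "'a set set" and w :: "'a set \<Rightarrow> real"
    and k R :: nat and x y a b :: 'a and P :: "'a list" and I :: "nat list"
    and S_R :: "'a set" and center :: "'a \<Rightarrow> 'a"
  assumes G: "wgraph V E w"
    and edges_shortest: "\<forall>e\<in>E. \<forall>u v. e = {u, v} \<longrightarrow> gdist E w u v = ereal (w e)"
    and k: "odd k" "k \<ge> 3" and R: "R = (k - 1) div 2"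
    and HG: "H \<subseteq> E"
    and pair: "gdist H w x y > ereal (real k) * gdist E w x y + ereal ((real k - 1) * Wmax E w)"
    and P: "shortest_path E w x y P"
    and S: "minimal_k_segmentation E H w k P I"
    and centers: "\<forall>e\<in>Ek H w k P I. \<forall>v\<in>e.
                    center v \<in> S_R \<and> gdist H w v (center v) \<le> ereal (real R * w e)"
    and a: "a \<in> \<Union>(Ek H w k P I)" and b: "b \<in> \<Union>(Ek H w k P I)"
    and finalized: "gdist H w (center a) (center b)
          \<le> ereal (real k) * gdist E w (center a) (center b) - ereal ((real k)^2 * Wmax E w)"
  shows "\<exists>j. 0 < j \<and> j < length I \<and> {a, b} = {P ! (I ! (j - 1)), P ! (I ! j)} \<and>
             gdist H w a b \<le> ereal (real k) * gdist E w a b"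
proof -
  have nonneg: "\<forall>e\<in>E. 0 \<le> w e" and nonneg_H: "\<forall>e\<in>H. 0 \<le> w e"
    using G HG by (auto simp: wgraph_def less_imp_le)
  have "Ek H w k P I \<subseteq> E"
    using S P by (intro Ek_subset_edges) (auto simp: minimal_k_segmentation_def shortest_path_def)
  then have Ek_weight: "0 < w e \<and> w e \<le> Wmax E w" if "e \<in> Ek H w k P I" for e
    using that G Wmax_ge[OF wgraph_finite_edges[OF G]] unfolding wgraph_def by blast
  have center_close: "gdist H w v (center v) \<le> ereal (real R * Wmax E w)"
    if "e \<in> Ek H w k P I" "v \<in> e" for e v
  proof -
    have "real R * w e \<le> real R * Wmax E w"
      using Ek_weight[OF that(1)] by (simp add: mult_left_mono)
    then show ?thesis
      using centers that by (fastforce intro: order_trans)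
  qed
  obtain ea eb where a_in: "ea \<in> Ek H w k P I" "a \<in> ea"
    and b_in: "eb \<in> Ek H w k P I" "b \<in> eb"
    using a b by blast
  have W_pos: "0 < Wmax E w"
    using Ek_weight[OF a_in(1)] by linarith
  have "k = 2 * R + 1"
    using k R by (auto elim: oddE)
  with nonneg HG have stretch: "gdist H w a b + ereal (Wmax E w) \<le> ereal (real k) * gdist E w a b"
    using center_close[OF a_in] center_close[OF b_in] finalized by (rule finalized_centers_stretch)
  then have "a \<noteq> b"
    using W_pos by (auto simp: gdist_refl[OF nonneg] gdist_refl[OF nonneg_H])
  have "gdist H w a b \<le> gdist H w a b + ereal (Wmax E w)"
    using W_pos by (intro add_increasing2) auto
  then have "gdist H w a b \<le> ereal (real k) * gdist E w a b"
    using stretch by (rule order_trans)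
  moreover obtain ia ib where "ia < length I" "a = P ! (I ! ia)" "ib < length I" "b = P ! (I ! ib)"
    using Ek_vertex_breakpoint[OF a] Ek_vertex_breakpoint[OF b] by blast
  ultimately show ?thesis
    using minimal_k_segmentation_segment[OF S, of ia ib] \<open>a \<noteq> b\<close> by blast
qed

end
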